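(* Let $\mathbf{p}$ be a list of explainable predicate constants, let $R$ be an S-rule $L_1\leftrightarrow L_2\Leftarrow G$, and let $R_1$, $R_2$ be the D-rules $L_1\lor\overline{L_2}\Leftarrow G$ and $\overline{L_1}\lor L_2\Leftarrow G$. Then the conjunction $CC$ of completeness constraints for $\mathbf{p}$ intuitionistically entails $\mathrm{tr}_s[R]\leftrightarrow\mathrm{tr}_d[R_1]\land\mathrm{tr}_d[R_2]$.
   Context: $G$ is a first-order formula without $\to$; $L_1,L_2$ are literals whose predicate symbols belong to $\mathbf{p}$; $\overline{L}$ denotes the literal complementary to $L$ (i.e. $\overline{A}=\neg A$, $\overline{\neg A}=A$). For each $p\in\mathbf{p}$, $\widehat p$ is a new predicate constant of the same arity; for $A=p(\mathbf{t})$, $\widehat A=\widehat p(\mathbf{t})$; $\widetilde\forall$ is universal closure. $\mathrm{tr}_s[p_1(\mathbf{t}^1)\leftrightarrow p_2(\mathbf{t}^2)\Leftarrow G]=\mathrm{tr}_s[\neg p_1(\mathbf{t}^1)\leftrightarrow\neg p_2(\mathbf{t}^2)\Leftarrow G]$ is the conjunction of $\widetilde\forall(\neg\neg G\land p_1(\mathbf{t}^1)\to p_2(\mathbf{t}^2))$, $\widetilde\forall(\neg\neg G\land p_2(\mathbf{t}^2)\to p_1(\mathbf{t}^1))$, $\widetilde\forall(\neg\neg G\land \widehat{p_1}(\mathbf{t}^1)\to \widehat{p_2}(\mathbf{t}^2))$, $\widetilde\forall(\neg\neg G\land \widehat{p_2}(\mathbf{t}^2)\to \widehat{p_1}(\mathbf{t}^1))$;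 $\mathrm{tr}_s[\neg p_1(\mathbf{t}^1)\leftrightarrow p_2(\mathbf{t}^2)\Leftarrow G]=\mathrm{tr}_s[p_1(\mathbf{t}^1)\leftrightarrow\neg p_2(\mathbf{t}^2)\Leftarrow G]$ is the conjunction of $\widetilde\forall(\neg\neg G\land \widehat{p_1}(\mathbf{t}^1)\to p_2(\mathbf{t}^2))$, $\widetilde\forall(\neg\neg G\land p_2(\mathbf{t}^2)\to \widehat{p_1}(\mathbf{t}^1))$, $\widetilde\forall(\neg\neg G\land p_1(\mathbf{t}^1)\to \widehat{p_2}(\mathbf{t}^2))$, $\widetilde\forall(\neg\neg G\land \widehat{p_2}(\mathbf{t}^2)\to p_1(\mathbf{t}^1))$. For a D-rule $\bigvee_{A\in Pos}A\lor\bigvee_{A\in Neg}\neg A\Leftarrow G$ ($Pos,Neg$ sets of atoms), $\mathrm{tr}_d$ gives $\widetilde\forall\big(\neg\neg G\land\bigwedge_{A\in Pos}(\widehat A\lor\neg\widehat A)\land\bigwedge_{A\in Neg}(A\lor\neg A)\to\bigvee_{A\in Pos}A\lor\bigvee_{A\in Neg}\widehat A\big)$. $CC$ is the conjunction over $p\in\mathbf{p}$ of $\forall\mathbf{x}\neg(p(\mathbf{x})\land\widehat p(\mathbf{x}))$ and $\forall\mathbf{x}\neg(\neg p(\mathbf{x})\land\neg\widehat p(\mathbf{x}))$. Entailment is in first-order intuitionistic logic. *)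

theory Defs
  imports Main
begin

type_synonym var = nat

datatype trm = Var var | Fn string "trm list"

text \<open>Predicate symbols: original predicate constants (name, arity) and, for each of
them, the new "hat" predicate constant of the same arity.\<close>
datatype psym = Orig string nat | Hat string nat

datatype frm =
    Bot
  | Atom psym "trm list"
  | Neg frm
  | Conj frm frm
  | Disj frm frm
  | Imp frm frm
  | All var frm
  | Ex var frm

definition Iff :: "frm \<Rightarrow> frm \<Rightarrow> frm" where
  "Iff a b = Conj (Imp a b) (Imp b a)"

definition Top :: frm where "Top = Neg Bot"

fun conj_list :: "frm list \<Rightarrow> frm" where
  "conj_list [] = Top"
| "conj_list [a] = a"
| "conj_list (a # as) = Conj a (conj_list as)"

fun disj_list :: "frm list \<Rightarrow> frm" where
  "disj_list [] = Bot"
| "disj_list [a] = a"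
| "disj_list (a # as) = Disj a (disj_list as)"

fun fvt :: "trm \<Rightarrow> var set" where
  "fvt (Var x) = {x}"
| "fvt (Fn f ts) = (\<Union>t\<in>set ts. fvt t)"

fun fv :: "frm \<Rightarrow> var set" where
  "fv Bot = {}"
| "fv (Atom P ts) = (\<Union>t\<in>set ts. fvt t)"
| "fv (Neg a) = fv a"
| "fv (Conj a b) = fv a \<union> fv b"
| "fv (Disj a b) = fv a \<union> fv b"
| "fv (Imp a b) = fv a \<union> fv b"
| "fv (All x a) = fv a - {x}"
| "fv (Ex x a) = fv a - {x}"

definition uclose :: "frm \<Rightarrow> frm" where
  "uclose a = foldr All (sorted_list_of_set (fv a)) a"

fun no_imp :: "frm \<Rightarrow> bool" where
  "no_imp Bot = True"
| "no_imp (Atom P ts) = True"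
| "no_imp (Neg a) = no_imp a"
| "no_imp (Conj a b) = (no_imp a \<and> no_imp b)"
| "no_imp (Disj a b) = (no_imp a \<and> no_imp b)"
| "no_imp (Imp a b) = False"
| "no_imp (All x a) = no_imp a"
| "no_imp (Ex x a) = no_imp a"

fun no_hat :: "frm \<Rightarrow> bool" where
  "no_hat Bot = True"
| "no_hat (Atom P ts) = (case P of Orig _ _ \<Rightarrow> True | Hat _ _ \<Rightarrow> False)"
| "no_hat (Neg a) = no_hat a"
| "no_hat (Conj a b) = (no_hat a \<and> no_hat b)"
| "no_hat (Disj a b) = (no_hat a \<and> no_hat b)"
| "no_hat (Imp a b) = (no_hat a \<and> no_hat b)"
| "no_hat (All x a) = no_hat a"
| "no_hat (Ex x a) = no_hat a"

datatype lit = PosL psym "trm list" | NegL psym "trm list"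

fun hat :: "psym \<Rightarrow> psym" where
  "hat (Orig n k) = Hat n k"
| "hat (Hat n k) = Hat n k"

fun compl :: "lit \<Rightarrow> lit" where
  "compl (PosL p ts) = NegL p ts"
| "compl (NegL p ts) = PosL p ts"

fun lit_in :: "(string \<times> nat) list \<Rightarrow> lit \<Rightarrow> bool" where
  "lit_in ps (PosL P ts) = (\<exists>n. P = Orig n (length ts) \<and> (n, length ts) \<in> set ps)"
| "lit_in ps (NegL P ts) = (\<exists>n. P = Orig n (length ts) \<and> (n, length ts) \<in> set ps)"

definition rclause :: "frm \<Rightarrow> frm \<Rightarrow> frm \<Rightarrow> frm" where
  "rclause g a b = uclose (Imp (Conj (Neg (Neg g)) a) b)"

text \<open>\<open>tr_s\<close> of the S-rule \<open>L1 \<leftrightarrow> L2 \<Leftarrow> G\<close>.\<close>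
fun tr_s :: "lit \<Rightarrow> lit \<Rightarrow> frm \<Rightarrow> frm" where
  "tr_s (PosL p1 t1) (PosL p2 t2) g =
     conj_list [rclause g (Atom p1 t1) (Atom p2 t2), rclause g (Atom p2 t2) (Atom p1 t1),
                rclause g (Atom (hat p1) t1) (Atom (hat p2) t2),
                rclause g (Atom (hat p2) t2) (Atom (hat p1) t1)]"
| "tr_s (NegL p1 t1) (NegL p2 t2) g =
     conj_list [rclause g (Atom p1 t1) (Atom p2 t2), rclause g (Atom p2 t2) (Atom p1 t1),
                rclause g (Atom (hat p1) t1) (Atom (hat p2) t2),
                rclause g (Atom (hat p2) t2) (Atom (hat p1) t1)]"
| "tr_s (NegL p1 t1) (PosL p2 t2) g =
     conj_list [rclause g (Atom (hat p1) t1) (Atom p2 t2), rclause g (Atom p2 t2) (Atom (hat p1) t1),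
                rclause g (Atom p1 t1) (Atom (hat p2) t2),
                rclause g (Atom (hat p2) t2) (Atom p1 t1)]"
| "tr_s (PosL p1 t1) (NegL p2 t2) g =
     conj_list [rclause g (Atom (hat p1) t1) (Atom p2 t2), rclause g (Atom p2 t2) (Atom (hat p1) t1),
                rclause g (Atom p1 t1) (Atom (hat p2) t2),
                rclause g (Atom (hat p2) t2) (Atom p1 t1)]"

fun pos_atoms :: "lit list \<Rightarrow> (psym \<times> trm list) list" where
  "pos_atoms [] = []"
| "pos_atoms (PosL p ts # ls) = (p, ts) # pos_atoms ls"
| "pos_atoms (NegL p ts # ls) = pos_atoms ls"

fun neg_atoms :: "lit list \<Rightarrow> (psym \<times> trm list) list" where
  "neg_atoms [] = []"
| "neg_atoms (PosL p ts # ls) = neg_atoms ls"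
| "neg_atoms (NegL p ts # ls) = (p, ts) # neg_atoms ls"

text \<open>\<open>tr_d\<close> of the D-rule \<open>\<Or>head \<Leftarrow> G\<close>.\<close>
definition tr_d :: "lit list \<Rightarrow> frm \<Rightarrow> frm" where
  "tr_d hs g = uclose (Imp
     (Conj (Neg (Neg g))
        (conj_list (map (\<lambda>(p, ts). Disj (Atom (hat p) ts) (Neg (Atom (hat p) ts))) (pos_atoms hs)
                  @ map (\<lambda>(p, ts). Disj (Atom p ts) (Neg (Atom p ts))) (neg_atoms hs))))
     (disj_list (map (\<lambda>(p, ts). Atom p ts) (pos_atoms hs)
                 @ map (\<lambda>(p, ts). Atom (hat p) ts) (neg_atoms hs))))"

definition CC :: "(string \<times> nat) list \<Rightarrow> frm" where
  "CC ps = conj_list (map (\<lambda>(n, k).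
      Conj (foldr All [0..<k] (Neg (Conj (Atom (Orig n k) (map Var [0..<k]))
                                         (Atom (Hat n k) (map Var [0..<k])))))
           (foldr All [0..<k] (Neg (Conj (Neg (Atom (Orig n k) (map Var [0..<k])))
                                         (Neg (Atom (Hat n k) (map Var [0..<k]))))))) ps)"

definition kripke_model ::
  "('w \<Rightarrow> 'w \<Rightarrow> bool) \<Rightarrow> ('w \<Rightarrow> 'u set) \<Rightarrow> (string \<Rightarrow> 'u list \<Rightarrow> 'u)
     \<Rightarrow> ('w \<Rightarrow> psym \<Rightarrow> 'u list \<Rightarrow> bool) \<Rightarrow> bool" where
  "kripke_model le D fn I \<longleftrightarrow>
     (\<forall>w. le w w) \<and> (\<forall>u v w. le u v \<longrightarrow> le v w \<longrightarrow> le u w) \<and>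
     (\<forall>w. D w \<noteq> {}) \<and> (\<forall>w v. le w v \<longrightarrow> D w \<subseteq> D v) \<and>
     (\<forall>w f as. set as \<subseteq> D w \<longrightarrow> fn f as \<in> D w) \<and>
     (\<forall>w v P as. le w v \<longrightarrow> I w P as \<longrightarrow> I v P as)"

fun evalt :: "(string \<Rightarrow> 'u list \<Rightarrow> 'u) \<Rightarrow> (var \<Rightarrow> 'u) \<Rightarrow> trm \<Rightarrow> 'u" where
  "evalt fn e (Var x) = e x"
| "evalt fn e (Fn f ts) = fn f (map (evalt fn e) ts)"

fun forces ::
  "('w \<Rightarrow> 'w \<Rightarrow> bool) \<Rightarrow> ('w \<Rightarrow> 'u set) \<Rightarrow> (string \<Rightarrow> 'u list \<Rightarrow> 'u)
     \<Rightarrow> ('w \<Rightarrow> psym \<Rightarrow> 'u list \<Rightarrow> bool) \<Rightarrow> 'w \<Rightarrow> (var \<Rightarrow> 'u) \<Rightarrow> frm \<Rightarrow> bool" where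
  "forces le D fn I w e Bot = False"
| "forces le D fn I w e (Atom P ts) = I w P (map (evalt fn e) ts)"
| "forces le D fn I w e (Neg a) = (\<forall>v. le w v \<longrightarrow> \<not> forces le D fn I v e a)"
| "forces le D fn I w e (Conj a b) = (forces le D fn I w e a \<and> forces le D fn I w e b)"
| "forces le D fn I w e (Disj a b) = (forces le D fn I w e a \<or> forces le D fn I w e b)"
| "forces le D fn I w e (Imp a b) =
     (\<forall>v. le w v \<longrightarrow> forces le D fn I v e a \<longrightarrow> forces le D fn I v e b)"
| "forces le D fn I w e (All x a) =
     (\<forall>v. le w v \<longrightarrow> (\<forall>d\<in>D v. forces le D fn I v (e(x := d)) a))"
| "forces le D fn I w e (Ex x a) = (\<exists>d\<in>D w. forces le D fn I w (e(x := d)) a)"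

end

theory Submission
  imports Defs
begin

(*
  Under the completeness constraints the atom standing for the complement of a literal behaves,
  at every world, as a strong negation of the atom standing for the literal: the two are never
  forced together and no world refutes both. In Kripke semantics the translations then speak
  about the up-sets a1, b1, a2, b2 of worlds forcing L1, its complement, L2 and its complement,
  inside the up-set where the guard holds: tr_s says a1 = a2 and b1 = b2, and the two D-rules say
  (b1 or not b1) and (a2 or not a2) entail a1 or b2, resp. (a1 or not a1) and (b2 or not b2)
  entail b1 or a2. For such up-set pairs these are equivalent. For instance, from a1 we get
  not b2, because a later b2 would yield b1 or a2 by the second rule, both excluded; then the
  second rule itself gives a2.
*)

definition upclosed :: "('w \<Rightarrow> 'w \<Rightarrow> bool) \<Rightarrow> ('w \<Rightarrow> bool) \<Rightarrow> bool" where
  "upclosed le P \<longleftrightarrow> (\<forall>v u. le v u \<longrightarrow> P v \<longrightarrow> P u)"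

definition up_neg :: "('w \<Rightarrow> 'w \<Rightarrow> bool) \<Rightarrow> ('w \<Rightarrow> bool) \<Rightarrow> 'w \<Rightarrow> bool" where
  "up_neg le P v \<longleftrightarrow> (\<forall>u. le v u \<longrightarrow> \<not> P u)"

lemma disj_rule_of_equivs:
  assumes trans: "transp le"
    and g: "upclosed le g"
    and exhaustive: "\<And>v. le x v \<Longrightarrow> g v \<Longrightarrow> \<not> (up_neg le a1 v \<and> up_neg le b1 v)"
    and a: "\<And>v. le x v \<Longrightarrow> g v \<Longrightarrow> a1 v \<longleftrightarrow> a2 v"
    and b: "\<And>v. le x v \<Longrightarrow> g v \<Longrightarrow> b1 v \<longleftrightarrow> b2 v"
    and v: "le x v" "g v"
    and b1: "b1 v \<or> up_neg le b1 v" and a2: "a2 v \<or> up_neg le a2 v"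
  shows "a1 v \<or> b2 v"
proof (cases "a2 v \<or> b1 v")
  case True
  then show ?thesis using a b v by blast
next
  case False
  then have "up_neg le a2 v" "up_neg le b1 v" using a2 b1 by auto
  then have "up_neg le a1 v"
    using a v transpD[OF trans] g unfolding up_neg_def upclosed_def by blast
  with \<open>up_neg le b1 v\<close> show ?thesis using exhaustive v by blast
qed

lemma equiv_of_disj_rule:
  assumes trans: "transp le"
    and g: "upclosed le g" and a1: "upclosed le a1"
    and disjoint1: "\<And>v. le x v \<Longrightarrow> g v \<Longrightarrow> \<not> (a1 v \<and> b1 v)"
    and disjoint2: "\<And>v. le x v \<Longrightarrow> g v \<Longrightarrow> \<not> (a2 v \<and> b2 v)"
    and rule: "\<And>v. le x v \<Longrightarrow> g v \<Longrightarrow> a1 v \<or> up_neg le a1 v \<Longrightarrow> b2 v \<or> up_neg le b2 v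
      \<Longrightarrow> b1 v \<or> a2 v"
    and v: "le x v" "g v" "a1 v"
  shows "a2 v"
proof -
  have "up_neg le b2 v"
    unfolding up_neg_def
  proof (intro allI impI notI)
    fix u assume "le v u" "b2 u"
    moreover have "le x u" "g u" "a1 u"
      using \<open>le v u\<close> v transpD[OF trans] g a1 unfolding upclosed_def by blast+
    ultimately show False using rule disjoint1 disjoint2 by blast
  qed
  then show "a2 v" using rule v disjoint1 by blast
qed

lemma equivs_iff_disj_rules:
  assumes trans: "transp le"
    and g: "upclosed le g"
    and up: "upclosed le a1" "upclosed le b1" "upclosed le a2" "upclosed le b2"
    and disjoint: "\<And>v. le x v \<Longrightarrow> g v \<Longrightarrow> \<not> (a1 v \<and> b1 v)"
      "\<And>v. le x v \<Longrightarrow> g v \<Longrightarrow> \<not> (a2 v \<and> b2 v)"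
    and exhaustive: "\<And>v. le x v \<Longrightarrow> g v \<Longrightarrow> \<not> (up_neg le a1 v \<and> up_neg le b1 v)"
      "\<And>v. le x v \<Longrightarrow> g v \<Longrightarrow> \<not> (up_neg le a2 v \<and> up_neg le b2 v)"
  shows "(\<forall>v. le x v \<longrightarrow> g v \<longrightarrow> (a1 v \<longleftrightarrow> a2 v) \<and> (b1 v \<longleftrightarrow> b2 v)) \<longleftrightarrow>
    (\<forall>v. le x v \<longrightarrow> g v \<longrightarrow>
      (b1 v \<or> up_neg le b1 v \<longrightarrow> a2 v \<or> up_neg le a2 v \<longrightarrow> a1 v \<or> b2 v) \<and>
      (a1 v \<or> up_neg le a1 v \<longrightarrow> b2 v \<or> up_neg le b2 v \<longrightarrow> b1 v \<or> a2 v))"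
    (is "?equivs \<longleftrightarrow> ?rules")
proof
  assume ?equivs
  then have a: "\<And>v. le x v \<Longrightarrow> g v \<Longrightarrow> a1 v \<longleftrightarrow> a2 v"
    and b: "\<And>v. le x v \<Longrightarrow> g v \<Longrightarrow> b1 v \<longleftrightarrow> b2 v" by blast+
  show ?rules
    using disj_rule_of_equivs[OF trans g exhaustive(1) a b]
      disj_rule_of_equivs[of le g x b1 a1 b2 a2, OF trans g _ b a] exhaustive(1)
    by blast
next
  assume ?rules
  then have r1: "\<And>v. le x v \<Longrightarrow> g v \<Longrightarrow> b1 v \<or> up_neg le b1 v \<Longrightarrow> a2 v \<or> up_neg le a2 v
      \<Longrightarrow> a1 v \<or> b2 v"
    and r2: "\<And>v. le x v \<Longrightarrow> g v \<Longrightarrow> a1 v \<or> up_neg le a1 v \<Longrightarrow> b2 v \<or> up_neg le b2 v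
      \<Longrightarrow> b1 v \<or> a2 v" by blast+
  have "a1 v \<longrightarrow> a2 v" "a2 v \<longrightarrow> a1 v" "b1 v \<longrightarrow> b2 v" "b2 v \<longrightarrow> b1 v" if "le x v" "g v" for v
    using equiv_of_disj_rule[OF trans g up(1) disjoint r2]
      equiv_of_disj_rule[of le g a2 x b2 a1 b1, OF trans g up(3)]
      equiv_of_disj_rule[of le g b1 x a1 b2 a2, OF trans g up(2)]
      equiv_of_disj_rule[of le g b2 x a2 b1 a1, OF trans g up(4)]
      disjoint r1 r2 that
    by blast+
  then show ?equivs by blast
qed

lemma finite_fvt: "finite (fvt t)"
  by (induction t) auto

lemma finite_fv: "finite (fv a)"
  by (induction a) (auto simp: finite_fvt)

lemma evalt_cong: "\<forall>x\<in>fvt t. e x = e' x \<Longrightarrow> evalt fn e t = evalt fn e' t"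
  by (induction t) (auto cong: map_cong)

lemma forces_cong:
  "\<forall>x\<in>fv a. e x = e' x \<Longrightarrow> forces le D fn I w e a = forces le D fn I w e' a"
proof (induction a arbitrary: w e e')
  case (Atom P ts)
  then show ?case by (auto intro!: arg_cong[where f = "I w P"] evalt_cong)
next
  case (All x a)
  have "forces le D fn I v (e(x := d)) a = forces le D fn I v (e'(x := d)) a" for v d
    using All.prems by (intro All.IH) auto
  then show ?case by simp
next
  case (Ex x a)
  have "forces le D fn I w (e(x := d)) a = forces le D fn I w (e'(x := d)) a" for d
    using Ex.prems by (intro Ex.IH) auto
  then show ?case by simp
next
  case (Neg a)
  have "forces le D fn I v e a = forces le D fn I v e' a" for v
    using Neg.prems by (intro Neg.IH) auto
  then show ?case by simp
next
  case (Conj a b)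
  have "forces le D fn I v e a = forces le D fn I v e' a"
    and "forces le D fn I v e b = forces le D fn I v e' b" for v
    using Conj.prems by (intro Conj.IH; auto)+
  then show ?case by simp
next
  case (Disj a b)
  have "forces le D fn I v e a = forces le D fn I v e' a"
    and "forces le D fn I v e b = forces le D fn I v e' b" for v
    using Disj.prems by (intro Disj.IH; auto)+
  then show ?case by simp
next
  case (Imp a b)
  have "forces le D fn I v e a = forces le D fn I v e' a"
    and "forces le D fn I v e b = forces le D fn I v e' b" for v
    using Imp.prems by (intro Imp.IH; auto)+
  then show ?case by simp
qed simp

lemma compl_compl [simp]: "compl (compl L) = L"
  by (cases L) simp_all

(* The atom representing L in the translations; lit_atom (compl L) represents its complement. *)
fun lit_atom :: "lit \<Rightarrow> frm" where
  "lit_atom (PosL p ts) = Atom p ts"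
| "lit_atom (NegL p ts) = Atom (hat p) ts"

lemma forces_conj_list:
  "forces le D fn I w e (conj_list as) \<longleftrightarrow> (\<forall>a\<in>set as. forces le D fn I w e a)"
  by (induction as rule: conj_list.induct) (auto simp: Top_def)

locale kripke =
  fixes le :: "'w \<Rightarrow> 'w \<Rightarrow> bool" and D :: "'w \<Rightarrow> 'u set"
    and fn :: "string \<Rightarrow> 'u list \<Rightarrow> 'u" and I :: "'w \<Rightarrow> psym \<Rightarrow> 'u list \<Rightarrow> bool"
  assumes model: "kripke_model le D fn I"
begin

abbreviation forced :: "'w \<Rightarrow> (var \<Rightarrow> 'u) \<Rightarrow> frm \<Rightarrow> bool" where
  "forced \<equiv> forces le D fn I"

lemma world_refl: "le v v"
  and world_trans: "le u v \<Longrightarrow> le v z \<Longrightarrow> le u z"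
  and domain_nonempty: "D v \<noteq> {}"
  and domain_mono: "le v u \<Longrightarrow> D v \<subseteq> D u"
  and fn_closed: "set as \<subseteq> D v \<Longrightarrow> fn f as \<in> D v"
  and interp_mono: "le v u \<Longrightarrow> I v P as \<Longrightarrow> I u P as"
  using model unfolding kripke_model_def by blast+

lemma transp_world: "transp le"
  using world_trans by (rule transpI)

lemma evalt_in_domain: "\<forall>x. e x \<in> D v \<Longrightarrow> evalt fn e t \<in> D v"
  by (induction t) (auto intro!: fn_closed)

lemma forced_mono: "le v u \<Longrightarrow> forced v e a \<Longrightarrow> forced u e a"
proof (induction a arbitrary: v u e)
  case (Atom P ts)
  then show ?case by (auto intro: interp_mono)
next
  case (Ex x a)
  then show ?case using domain_mono by fastforce
qed (auto intro: world_trans)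

lemma upclosed_forced: "upclosed le (\<lambda>v. forced v e a)"
  unfolding upclosed_def using forced_mono by blast

lemma up_neg_forced: "up_neg le (\<lambda>v. forced v e a) v \<longleftrightarrow> forced v e (Neg a)"
  by (simp add: up_neg_def)

lemma forced_foldr_All:
  "forced v e (foldr All xs a) \<longleftrightarrow>
    (\<forall>u e'. le v u \<longrightarrow> (\<forall>x\<in>set xs. e' x \<in> D u) \<longrightarrow> (\<forall>x. x \<notin> set xs \<longrightarrow> e' x = e x)
       \<longrightarrow> forced u e' a)"
proof (induction xs arbitrary: v e)
  case Nil
  have "(\<forall>x. e' x = e x) \<longleftrightarrow> e' = e" for e' :: "var \<Rightarrow> 'u" by auto
  then show ?case using forced_mono world_refl by auto
next
  case (Cons y xs)
  show ?case
  proof (intro iffI allI impI)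
    fix u e'
    assume "forced v e (foldr All (y # xs) a)" and u: "le v u" and
      e'_dom: "\<forall>x\<in>set (y # xs). e' x \<in> D u" and e'_out: "\<forall>x. x \<notin> set (y # xs) \<longrightarrow> e' x = e x"
    then have "forced u (e(y := e' y)) (foldr All xs a)" by simp
    moreover have "\<forall>x. x \<notin> set xs \<longrightarrow> e' x = (e(y := e' y)) x" using e'_out by simp
    ultimately show "forced u e' a" using Cons.IH e'_dom world_refl by auto
  next
    assume H: "\<forall>u e'. le v u \<longrightarrow> (\<forall>x\<in>set (y # xs). e' x \<in> D u)
        \<longrightarrow> (\<forall>x. x \<notin> set (y # xs) \<longrightarrow> e' x = e x) \<longrightarrow> forced u e' a"
    have "forced u (e(y := d)) (foldr All xs a)" if u: "le v u" "d \<in> D u" for u d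
      unfolding Cons.IH
    proof (intro allI impI)
      fix z e'
      assume z: "le u z" and e'_dom: "\<forall>x\<in>set xs. e' x \<in> D z"
        and e'_out: "\<forall>x. x \<notin> set xs \<longrightarrow> e' x = (e(y := d)) x"
      have "e' y \<in> D z" using e'_dom e'_out u(2) domain_mono[OF z] by (cases "y \<in> set xs") auto
      then show "forced z e' a"
        using H world_trans[OF u(1) z] e'_dom e'_out by auto
    qed
    then show "forced v e (foldr All (y # xs) a)" by simp
  qed
qed

lemma forced_uclose:
  "forced v e (uclose a) \<longleftrightarrow> (\<forall>u e'. le v u \<longrightarrow> (\<forall>x. e' x \<in> D u) \<longrightarrow> forced u e' a)"
proof -
  have agree: "forced u e' a \<longleftrightarrow> forced u (\<lambda>x. if x \<in> fv a then e' x else e'' x) a" for u e' e''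
    by (rule forces_cong) simp
  show ?thesis
    unfolding uclose_def forced_foldr_All set_sorted_list_of_set[OF finite_fv]
  proof (intro iffI allI impI)
    fix u and e' :: "var \<Rightarrow> 'u"
    assume "\<forall>u e'. le v u \<longrightarrow> (\<forall>x\<in>fv a. e' x \<in> D u) \<longrightarrow> (\<forall>x. x \<notin> fv a \<longrightarrow> e' x = e x)
        \<longrightarrow> forced u e' a" and "le v u" "\<forall>x. e' x \<in> D u"
    then show "forced u e' a" using agree[of u e' e] by auto
  next
    fix u and e' :: "var \<Rightarrow> 'u"
    assume all: "\<forall>u e'. le v u \<longrightarrow> (\<forall>x. e' x \<in> D u) \<longrightarrow> forced u e' a"
      and u: "le v u" "\<forall>x\<in>fv a. e' x \<in> D u"
    obtain d where "d \<in> D u" using domain_nonempty by blast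
    then show "forced u e' a" using all u agree[of u e' "\<lambda>_. d"] by auto
  qed
qed

lemma forced_uclose_Imp:
  "forced v e (uclose (Imp a b)) \<longleftrightarrow>
    (\<forall>u e'. le v u \<longrightarrow> (\<forall>x. e' x \<in> D u) \<longrightarrow> forced u e' a \<longrightarrow> forced u e' b)"
  unfolding forced_uclose forces.simps
proof (intro iffI allI impI)
  fix u z e'
  assume "\<forall>u e'. le v u \<longrightarrow> (\<forall>x. e' x \<in> D u) \<longrightarrow> forced u e' a \<longrightarrow> forced u e' b"
    and "le v u" "\<forall>x. e' x \<in> D u" "le u z" "forced z e' a"
  then show "forced z e' b" using world_trans domain_mono by blast
qed (use world_refl in blast)

lemma forced_tr_s:
  "forced v e (tr_s L1 L2 G) \<longleftrightarrow>
    (\<forall>e' u. le v u \<longrightarrow> (\<forall>x. e' x \<in> D u) \<and> forced u e' (Neg (Neg G)) \<longrightarrow>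
       (forced u e' (lit_atom L1) \<longleftrightarrow> forced u e' (lit_atom L2)) \<and>
       (forced u e' (lit_atom (compl L1)) \<longleftrightarrow> forced u e' (lit_atom (compl L2))))"
  by (cases L1; cases L2; simp only: tr_s.simps forces_conj_list list.set ball_simps rclause_def
      forced_uclose_Imp forces.simps(4) lit_atom.simps compl.simps; blast)

lemma forced_tr_d:
  "forced v e (tr_d [L, compl L'] G) \<longleftrightarrow>
    (\<forall>e' u. le v u \<longrightarrow> (\<forall>x. e' x \<in> D u) \<and> forced u e' (Neg (Neg G)) \<longrightarrow>
       forced u e' (lit_atom (compl L)) \<or> forced u e' (Neg (lit_atom (compl L))) \<longrightarrow>
       forced u e' (lit_atom L') \<or> forced u e' (Neg (lit_atom L')) \<longrightarrow>
       forced u e' (lit_atom L) \<or> forced u e' (lit_atom (compl L')))"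
  by (cases L; cases L'; simp only: tr_d_def forced_uclose_Imp compl.simps pos_atoms.simps
      neg_atoms.simps list.map append.simps conj_list.simps disj_list.simps prod.case
      forces.simps(4,5) lit_atom.simps; blast)

lemma forced_All_upt:
  assumes "forced w e (foldr All [0..<length as] a)" "le w v" "set as \<subseteq> D v"
  shows "forced v (\<lambda>i. if i < length as then as ! i else e i) a"
proof -
  have "\<forall>i\<in>{0..<length as}. as ! i \<in> D v" using assms(3) by auto
  then show ?thesis using assms(1,2) unfolding forced_foldr_All by auto
qed

lemma forced_CC:
  assumes "forced w e (CC ps)" "(n, length as) \<in> set ps" "le w v" "set as \<subseteq> D v"
  shows "\<not> (I v (Orig n (length as)) as \<and> I v (Hat n (length as)) as)"
    and "\<not> ((\<forall>u. le v u \<longrightarrow> \<not> I u (Orig n (length as)) as) \<and>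
            (\<forall>u. le v u \<longrightarrow> \<not> I u (Hat n (length as)) as))"
proof -
  let ?e = "\<lambda>i. if i < length as then as ! i else e i" and ?xs = "map Var [0..<length as]"
  have args: "map (evalt fn ?e) ?xs = as"
    by (rule nth_equalityI) auto
  have "forced w e (foldr All [0..<length as]
          (Neg (Conj (Atom (Orig n (length as)) ?xs) (Atom (Hat n (length as)) ?xs))))"
    and "forced w e (foldr All [0..<length as]
          (Neg (Conj (Neg (Atom (Orig n (length as)) ?xs)) (Neg (Atom (Hat n (length as)) ?xs)))))"
    using assms(1,2) unfolding CC_def forces_conj_list by fastforce+
  from this[THEN forced_All_upt, OF assms(3,4)] show
    "\<not> (I v (Orig n (length as)) as \<and> I v (Hat n (length as)) as)"
    "\<not> ((\<forall>u. le v u \<longrightarrow> \<not> I u (Orig n (length as)) as) \<and>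
            (\<forall>u. le v u \<longrightarrow> \<not> I u (Hat n (length as)) as))"
    using world_refl unfolding forces.simps args by blast+
qed

lemma forced_CC_lit:
  assumes "lit_in ps L" "forced w e (CC ps)" "le w v" "\<forall>x. e' x \<in> D v"
  shows "\<not> (forced v e' (lit_atom L) \<and> forced v e' (lit_atom (compl L)))"
    and "\<not> (forced v e' (Neg (lit_atom L)) \<and> forced v e' (Neg (lit_atom (compl L))))"
proof -
  obtain P ts where L: "L = PosL P ts \<or> L = NegL P ts" by (cases L) auto
  with assms(1) obtain n where P: "P = Orig n (length ts)" and n: "(n, length ts) \<in> set ps"
    by auto
  have n': "(n, length (map (evalt fn e') ts)) \<in> set ps" using n by simp
  have "set (map (evalt fn e') ts) \<subseteq> D v" using evalt_in_domain assms(4) by auto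
  from forced_CC[OF assms(2) n' assms(3) this] L P
  show "\<not> (forced v e' (lit_atom L) \<and> forced v e' (lit_atom (compl L)))"
    and "\<not> (forced v e' (Neg (lit_atom L)) \<and> forced v e' (Neg (lit_atom (compl L))))"
    by auto
qed

lemma forced_tr_s_iff_tr_d:
  assumes L: "lit_in ps L1" "lit_in ps L2" and CC: "forced w e (CC ps)" and v: "le w v"
  shows "forced v e (tr_s L1 L2 G) \<longleftrightarrow>
    forced v e (Conj (tr_d [L1, compl L2] G) (tr_d [compl L1, L2] G))"
proof -
  let ?A1 = "lit_atom L1" and ?B1 = "lit_atom (compl L1)"
    and ?A2 = "lit_atom L2" and ?B2 = "lit_atom (compl L2)"
  have equiv: "(\<forall>u. le v u \<longrightarrow> (\<forall>x. e' x \<in> D u) \<and> forced u e' (Neg (Neg G)) \<longrightarrow>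
       (forced u e' ?A1 \<longleftrightarrow> forced u e' ?A2) \<and> (forced u e' ?B1 \<longleftrightarrow> forced u e' ?B2)) \<longleftrightarrow>
    (\<forall>u. le v u \<longrightarrow> (\<forall>x. e' x \<in> D u) \<and> forced u e' (Neg (Neg G)) \<longrightarrow>
       (forced u e' ?B1 \<or> forced u e' (Neg ?B1) \<longrightarrow> forced u e' ?A2 \<or> forced u e' (Neg ?A2) \<longrightarrow>
          forced u e' ?A1 \<or> forced u e' ?B2) \<and>
       (forced u e' ?A1 \<or> forced u e' (Neg ?A1) \<longrightarrow> forced u e' ?B2 \<or> forced u e' (Neg ?B2) \<longrightarrow>
          forced u e' ?B1 \<or> forced u e' ?A2))" for e'
  proof -
    have guard: "upclosed le (\<lambda>u. (\<forall>x. e' x \<in> D u) \<and> forced u e' (Neg (Neg G)))"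
      using domain_mono forced_mono unfolding upclosed_def by blast
    have "le w u" if "le v u" for u using world_trans[OF v that] .
    with forced_CC_lit[OF L(1) CC] forced_CC_lit[OF L(2) CC]
    show ?thesis
      by (subst equivs_iff_disj_rules[OF transp_world guard upclosed_forced upclosed_forced
            upclosed_forced upclosed_forced, unfolded up_neg_forced]; blast)
  qed
  show ?thesis
    unfolding forced_tr_s equiv forces.simps(4) forced_tr_d
      forced_tr_d[where L = "compl L1" and L' = "compl L2", unfolded compl_compl]
    by blast
qed

end

theorem lemma11:
  fixes ps :: "(string \<times> nat) list"
    and L1 L2 :: lit and G :: frm
    and le :: "'w \<Rightarrow> 'w \<Rightarrow> bool" and D :: "'w \<Rightarrow> 'u set"
    and fn :: "string \<Rightarrow> 'u list \<Rightarrow> 'u" and I :: "'w \<Rightarrow> psym \<Rightarrow> 'u list \<Rightarrow> bool"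
  assumes "no_imp G" and "no_hat G"
    and "lit_in ps L1" and "lit_in ps L2"
    and "kripke_model le D fn I"
    and "\<forall>x. e x \<in> D w"
    and "forces le D fn I w e (CC ps)"
  shows "forces le D fn I w e
           (Iff (tr_s L1 L2 G) (Conj (tr_d [L1, compl L2] G) (tr_d [compl L1, L2] G)))"
proof -
  interpret kripke le D fn I using assms(5) by (rule kripke.intro)
  have "forces le D fn I v e (tr_s L1 L2 G) \<longleftrightarrow>
      forces le D fn I v e (Conj (tr_d [L1, compl L2] G) (tr_d [compl L1, L2] G))"
    if "le w v" for v
    using forced_tr_s_iff_tr_d[OF assms(3,4,7) that] .
  then show ?thesis unfolding Iff_def forces.simps(4,6) by blast
qed

end
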